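(* Suppose all edge probabilities $p_{ij}$ and the community size $r$ are known, and fix $\epsilon>0$. Consider the scan test that rejects the null hypothesis (outputs $1$) if and only if \[ T^{\mathsf k}:=\max_{D\subseteq V,\ 1\le|D|\le r}T^{\mathsf k}_D\ \ge\ 1+\frac{\epsilon}{2}. \] This test is asymptotically powerful provided the following three conditions hold: $r=o(n)$; $\mathbb{E}_C[e(D^\star_C)]\to\infty$ for all $C\subseteq V$ with $|C|=r$; and for every $C\subseteq V$ with $|C|=r$, \[ \max_{\emptyset\ne D\subseteq C}\frac{\mathbb{E}_0[e(D)]\,h(\rho_C-1)}{|D|\log(n/|D|)}\ge1+\epsilon . \]
   Context: Setting. For each $n$ let $V=\{1,\dots,n\}$, let $p_{ij}=p_{ji}\in[0,1]$ ($i\ne j$) be edge probabilities, let $r=r_n$ be a community size, and for every $C\subseteq V$ with $|C|=r$ let $\rho_C>1$ be a scaling with $\rho_Cp_{ij}\le1$ for $i,j\in C$. All of these may depend on $n$, and limits are as $n\to\infty$. One observes a simple undirected graph on $V$ with adjacency matrix $A$. Under $\mathbb{P}_0$ the $A_{ij}$, $i<j$, are independent $\mathrm{Bern}(p_{ij})$. Under $\mathbb{P}_C$ ($|C|=r$) they are independent with $A_{ij}\sim\mathrm{Bern}(\rho_Cp_{ij})$ if $i,j\in C$ and $\mathrm{Bern}(p_{ij})$ otherwise. $\mathbb{E}_0$ and $\mathbb{E}_C$ are the corresponding expectations. A test $\psi_n$ (a map from graphs to $\{0,1\}$) has worst-case risk $R_n(\psi_n)=\mathbb{P}_0(\psi_n\ne0)+\max_{|C|=r}\mathbb{P}_C(\psi_n\ne1)$.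 It is asymptotically powerful if $R_n(\psi_n)\to0$. Notation. $e(D)=\sum_{i<j,\ i,j\in D}A_{ij}$. $h(x)=(x+1)\log(x+1)-x$. $[x]_+=\max\{x,0\}$. For $D\subseteq V$, \[ T^{\mathsf k}_D=\frac{\mathbb{E}_0[e(D)]\,h\big([e(D)/\mathbb{E}_0[e(D)]-1]_+\big)}{|D|\log(n/|D|)}, \] with the convention $T^{\mathsf k}_D=0$ when $\mathbb{E}_0[e(D)]=0$. For $C$ with $|C|=r$, $D^\star_C$ denotes a maximizer of $\frac{\mathbb{E}_0[e(D)]}{|D|\log(n/|D|)}$ over nonempty $D\subseteq C$ (the "most informative subgraph"). *)

theory Defs
  imports Complex_Main
begin

definition verts :: "nat \<Rightarrow> nat set" where
  "verts n = {1..n}"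

definition vpairs :: "nat \<Rightarrow> (nat \<times> nat) set" where
  "vpairs n = {(i,j). i \<in> verts n \<and> j \<in> verts n \<and> i < j}"

definition graphs :: "nat \<Rightarrow> (nat \<times> nat) set set" where
  "graphs n = Pow (vpairs n)"

definition graph_prob :: "nat \<Rightarrow> (nat \<Rightarrow> nat \<Rightarrow> real) \<Rightarrow> (nat \<times> nat) set \<Rightarrow> real" where
  "graph_prob n q G = (\<Prod>(i,j)\<in>vpairs n. if (i,j) \<in> G then q i j else 1 - q i j)"

definition prob_ev :: "nat \<Rightarrow> (nat \<Rightarrow> nat \<Rightarrow> real) \<Rightarrow> ((nat \<times> nat) set \<Rightarrow> bool) \<Rightarrow> real" where
  "prob_ev n q P = (\<Sum>G\<in>{G\<in>graphs n. P G}. graph_prob n q G)"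

definition expect :: "nat \<Rightarrow> (nat \<Rightarrow> nat \<Rightarrow> real) \<Rightarrow> ((nat \<times> nat) set \<Rightarrow> real) \<Rightarrow> real" where
  "expect n q f = (\<Sum>G\<in>graphs n. graph_prob n q G * f G)"

definition alt_prob :: "(nat \<Rightarrow> nat \<Rightarrow> real) \<Rightarrow> real \<Rightarrow> nat set \<Rightarrow> nat \<Rightarrow> nat \<Rightarrow> real" where
  "alt_prob p \<rho> C i j = (if i \<in> C \<and> j \<in> C then \<rho> * p i j else p i j)"

definition ecount :: "nat set \<Rightarrow> (nat \<times> nat) set \<Rightarrow> real" where
  "ecount D G = real (card {(i,j)\<in>G. i \<in> D \<and> j \<in> D})"

definition hfun :: "real \<Rightarrow> real" where
  "hfun x = (x + 1) * ln (x + 1) - x"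

definition scanT :: "nat \<Rightarrow> (nat \<Rightarrow> nat \<Rightarrow> real) \<Rightarrow> nat set \<Rightarrow> (nat \<times> nat) set \<Rightarrow> real" where
  "scanT n p D G =
     (let m = expect n p (ecount D) in
      if m = 0 then 0
      else m * hfun (max (ecount D G / m - 1) 0) / (real (card D) * ln (real n / real (card D))))"

definition scan_test :: "nat \<Rightarrow> (nat \<Rightarrow> nat \<Rightarrow> real) \<Rightarrow> nat \<Rightarrow> real \<Rightarrow> (nat \<times> nat) set \<Rightarrow> nat" where
  "scan_test n p r \<epsilon> G =
     (if (\<exists>D. D \<subseteq> verts n \<and> 1 \<le> card D \<and> card D \<le> r \<and> scanT n p D G \<ge> 1 + \<epsilon> / 2) then 1 else 0)"

definition communities :: "nat \<Rightarrow> nat \<Rightarrow> nat set set" where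
  "communities n r = {C. C \<subseteq> verts n \<and> card C = r}"

definition risk :: "nat \<Rightarrow> (nat \<Rightarrow> nat \<Rightarrow> real) \<Rightarrow> (nat set \<Rightarrow> real) \<Rightarrow> nat
                    \<Rightarrow> ((nat \<times> nat) set \<Rightarrow> nat) \<Rightarrow> real" where
  "risk n p \<rho> r \<psi> =
     prob_ev n p (\<lambda>G. \<psi> G \<noteq> 0)
     + Max ((\<lambda>C. prob_ev n (alt_prob p (\<rho> C) C) (\<lambda>G. \<psi> G \<noteq> 1)) ` communities n r)"

definition info_ratio :: "nat \<Rightarrow> (nat \<Rightarrow> nat \<Rightarrow> real) \<Rightarrow> nat set \<Rightarrow> real" where
  "info_ratio n p D = expect n p (ecount D) / (real (card D) * ln (real n / real (card D)))"

definition most_informative :: "nat \<Rightarrow> (nat \<Rightarrow> nat \<Rightarrow> real) \<Rightarrow> nat set \<Rightarrow> nat set \<Rightarrow> bool" where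
  "most_informative n p C D \<longleftrightarrow> D \<noteq> {} \<and> D \<subseteq> C \<and>
     (\<forall>D'. D' \<noteq> {} \<and> D' \<subseteq> C \<longrightarrow> info_ratio n p D' \<le> info_ratio n p D)"

end

theory Submission
  imports Defs
begin

(* Under the null, a Chernoff bound gives P_0(T_D >= tau) <= exp (- tau |D| log (n / |D|)) for
   each D, and a union bound over the at most (e n / k)^k sets of size k leaves a geometric series
   in exp (1 - (epsilon / 2) log (n / r)), which vanishes because r = o(n).
   Under P_C, let D be the most informative subgraph, m = E_0[e(D)] and mu = rho m = E_C[e(D)].
   The signal condition gives m h(rho - 1) >= (1 + epsilon) |D| log (n / |D|), and convexity of
   x |-> m h(x / m - 1) bounds m h(e(D) / m - 1) from below by m h(rho - 1) - log rho (mu - e(D)).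
   So T_D < 1 + epsilon / 2 forces a deficit mu - e(D) of order m h(rho - 1) / log rho, which the
   lower-tail Chernoff bound makes unlikely once both log (n / r) and mu are large. *)

section \<open>Elementary inequalities\<close>

lemma exp_minus_le_quadratic:
  fixes s :: real
  assumes "0 \<le> s"
  shows "exp (- s) \<le> 1 - s + s^2 / 2"
proof -
  let ?f = "\<lambda>x::real. 1 - x + x^2 / 2 - exp (- x)"
  have "?f 0 \<le> ?f s"
  proof (rule DERIV_nonneg_imp_nondecreasing[OF assms])
    fix x :: real
    assume "0 \<le> x" "x \<le> s"
    show "\<exists>d. (?f has_real_derivative d) (at x) \<and> 0 \<le> d"
    proof (intro exI conjI)
      show "(?f has_real_derivative x - 1 + exp (- x)) (at x)"
        by (auto intro!: derivative_eq_intros)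
      show "0 \<le> x - 1 + exp (- x)"
        using exp_ge_add_one_self[of "- x"] by simp
    qed
  qed
  then show ?thesis by simp
qed

lemma ln_square_le_hfun:
  fixes x :: real
  assumes "1 \<le> x"
  shows "(ln x)^2 / 2 \<le> hfun (x - 1)"
proof -
  let ?f = "\<lambda>y::real. y * ln y - y + 1 - (ln y)^2 / 2"
  have "?f 1 \<le> ?f x"
  proof (rule DERIV_nonneg_imp_nondecreasing[OF assms])
    fix y :: real
    assume y: "1 \<le> y" "y \<le> x"
    show "\<exists>d. (?f has_real_derivative d) (at y) \<and> 0 \<le> d"
    proof (intro exI conjI)
      show "(?f has_real_derivative ln y * (1 - 1 / y)) (at y)"
        using y by (auto intro!: derivative_eq_intros simp: field_simps)
      show "0 \<le> ln y * (1 - 1 / y)"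
        using y by (intro mult_nonneg_nonneg) (auto simp: field_simps)
    qed
  qed
  then show ?thesis by (simp add: hfun_def)
qed

lemma hfun_pos:
  fixes x :: real
  assumes "1 < x"
  shows "0 < hfun (x - 1)"
proof -
  have "0 < (ln x)^2 / 2"
    using assms by simp
  then show ?thesis
    using ln_square_le_hfun[of x] assms by linarith
qed

lemma power_div_fact_le_exp:
  fixes x :: real
  assumes "0 \<le> x"
  shows "x ^ k / fact k \<le> exp x"
proof -
  have "(\<Sum>i\<in>{k}. inverse (fact i) * x ^ i) \<le> (\<Sum>i. inverse (fact i) * x ^ i)"
    by (rule sum_le_suminf[OF summable_exp]) (use assms in auto)
  also have "\<dots> = exp x"
    by (simp add: exp_def scaleR_conv_of_real field_simps)
  finally show ?thesis by (simp add: field_simps)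
qed

lemma binomial_le_exp_power:
  "real (n choose k) \<le> (exp 1 * real n / real k) ^ k"
proof (cases "k = 0")
  case False
  have "real (n choose k) * real k ^ k \<le> real (n choose k) * (fact k * exp (real k))"
    using power_div_fact_le_exp[of "real k" k] by (intro mult_left_mono) (simp_all add: field_simps)
  also have "\<dots> = real ((n choose k) * fact k) * exp (real k)"
    by simp
  also have "\<dots> \<le> real n ^ k * exp (real k)"
    using binomial_fact_pow[of n k] by (intro mult_right_mono) (metis of_nat_le_iff of_nat_power, simp)
  finally have "real (n choose k) * real k ^ k \<le> (exp 1 * real n) ^ k"
    by (simp add: power_mult_distrib exp_of_nat_mult[symmetric] mult.commute)
  then show ?thesis
    using False by (simp add: power_divide field_simps)
qed simp

lemma geometric_sum_from_1_le:
  fixes x :: real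
  assumes "0 \<le> x" "x < 1"
  shows "(\<Sum>k=1..r. x ^ k) \<le> x / (1 - x)"
proof -
  have "(\<Sum>k=1..r. x ^ k) = x * ((1 - x ^ r) / (1 - x))"
    using assms by (simp add: sum.atLeast1_atMost_eq sum_distrib_left[symmetric] sum_gp_strict)
  also have "\<dots> \<le> x * (1 / (1 - x))"
    using assms by (intro mult_left_mono divide_right_mono) auto
  finally show ?thesis by simp
qed

section \<open>Random graphs with independent edges\<close>

definition edge_probs :: "nat \<Rightarrow> (nat \<Rightarrow> nat \<Rightarrow> real) \<Rightarrow> bool" where
  "edge_probs n q \<longleftrightarrow> (\<forall>i j. (i, j) \<in> vpairs n \<longrightarrow> 0 \<le> q i j \<and> q i j \<le> 1)"

definition pairs_within :: "nat \<Rightarrow> nat set \<Rightarrow> (nat \<times> nat) set" where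
  "pairs_within n D = {(i, j) \<in> vpairs n. i \<in> D \<and> j \<in> D}"

lemma finite_vpairs [simp]: "finite (vpairs n)"
  by (rule finite_subset[of _ "verts n \<times> verts n"]) (auto simp: vpairs_def verts_def)

lemma finite_graphs [simp]: "finite (graphs n)"
  by (simp add: graphs_def)

lemma pairs_within_subset: "pairs_within n D \<subseteq> vpairs n"
  by (auto simp: pairs_within_def)

lemma finite_pairs_within [simp]: "finite (pairs_within n D)"
  using finite_subset[OF pairs_within_subset] by simp

lemma graph_prob_eq_prod:
  "graph_prob n q G = (\<Prod>x\<in>vpairs n. if x \<in> G then case_prod q x else 1 - case_prod q x)"
  unfolding graph_prob_def by (rule prod.cong) auto

lemma graph_prob_nonneg: "edge_probs n q \<Longrightarrow> 0 \<le> graph_prob n q G"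
  unfolding graph_prob_eq_prod edge_probs_def by (rule prod_nonneg) (auto simp: split_def)

lemma prob_ev_nonneg: "edge_probs n q \<Longrightarrow> 0 \<le> prob_ev n q P"
  unfolding prob_ev_def by (rule sum_nonneg) (simp add: graph_prob_nonneg)

lemma prob_ev_mono:
  assumes "edge_probs n q" "\<And>G. G \<in> graphs n \<Longrightarrow> P G \<Longrightarrow> Q G"
  shows "prob_ev n q P \<le> prob_ev n q Q"
  unfolding prob_ev_def by (rule sum_mono2) (use assms graph_prob_nonneg in auto)

lemma prob_ev_eq_0: "(\<And>G. G \<in> graphs n \<Longrightarrow> \<not> P G) \<Longrightarrow> prob_ev n q P = 0"
  unfolding prob_ev_def by (rule sum.neutral) auto

lemma prob_ev_eq_expect: "prob_ev n q P = expect n q (\<lambda>G. if P G then 1 else 0)"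
  unfolding prob_ev_def expect_def by (simp add: sum.inter_filter[symmetric] if_distrib cong: if_cong)

lemma expect_mono:
  assumes "edge_probs n q" "\<And>G. G \<in> graphs n \<Longrightarrow> f G \<le> g G"
  shows "expect n q f \<le> expect n q g"
  unfolding expect_def by (rule sum_mono, rule mult_left_mono) (use assms graph_prob_nonneg in auto)

lemma expect_cmult: "expect n q (\<lambda>G. c * f G) = c * expect n q f"
  unfolding expect_def by (simp add: sum_distrib_left mult_ac)

lemma expect_sum: "expect n q (\<lambda>G. \<Sum>D\<in>A. f D G) = (\<Sum>D\<in>A. expect n q (f D))"
  unfolding expect_def by (simp add: sum_distrib_left sum.swap[of _ A])

lemma prob_ev_le_expect:
  assumes "edge_probs n q" "\<And>G. 0 \<le> f G" "\<And>G. P G \<Longrightarrow> 1 \<le> f G"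
  shows "prob_ev n q P \<le> expect n q f"
  unfolding prob_ev_eq_expect by (rule expect_mono) (use assms in auto)

lemma prob_ev_Bex_le_sum:
  assumes "edge_probs n q" "finite A"
  shows "prob_ev n q (\<lambda>G. \<exists>D\<in>A. P D G) \<le> (\<Sum>D\<in>A. prob_ev n q (P D))"
proof -
  have "prob_ev n q (\<lambda>G. \<exists>D\<in>A. P D G) \<le> expect n q (\<lambda>G. \<Sum>D\<in>A. if P D G then 1 else 0)"
  proof (rule prob_ev_le_expect[OF assms(1)])
    fix G
    show "0 \<le> (\<Sum>D\<in>A. if P D G then 1 else 0 :: real)"
      by (rule sum_nonneg) auto
    assume "\<exists>D\<in>A. P D G"
    then obtain D where D: "D \<in> A" "P D G" by blast
    have "(\<Sum>D\<in>{D}. if P D G then 1 else 0 :: real) \<le> (\<Sum>D\<in>A. if P D G then 1 else 0)"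
      by (rule sum_mono2) (use D assms in auto)
    then show "1 \<le> (\<Sum>D\<in>A. if P D G then 1 else 0 :: real)"
      using D by simp
  qed
  also have "\<dots> = (\<Sum>D\<in>A. prob_ev n q (P D))"
    by (simp add: expect_sum prob_ev_eq_expect)
  finally show ?thesis .
qed

lemma prob_ev_le_exp_moment:
  assumes "edge_probs n q" "\<And>G. P G \<Longrightarrow> a \<le> s * f G"
  shows "prob_ev n q P \<le> exp (- a) * expect n q (\<lambda>G. exp (s * f G))"
proof -
  have "prob_ev n q P \<le> expect n q (\<lambda>G. exp (- a) * exp (s * f G))"
  proof (rule prob_ev_le_expect[OF assms(1)])
    fix G
    show "0 \<le> exp (- a) * exp (s * f G)" by simp
    assume "P G"
    then have "1 \<le> exp (s * f G - a)"
      using assms(2) by simp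
    then show "1 \<le> exp (- a) * exp (s * f G)"
      by (simp add: exp_add[symmetric])
  qed
  then show ?thesis by (simp add: expect_cmult)
qed

lemma sum_Pow_prod_if:
  fixes a b :: "'a \<Rightarrow> 'c::comm_semiring_1"
  assumes "finite S"
  shows "(\<Sum>G\<in>Pow S. \<Prod>x\<in>S. if x \<in> G then a x else b x) = (\<Prod>x\<in>S. a x + b x)"
proof -
  have "(\<Prod>x\<in>S. a x + b x) = (\<Sum>X\<in>Pow S. (\<Prod>x\<in>X. a x) * (\<Prod>x\<in>S - X. b x))"
    by (rule prod_add[OF assms])
  also have "\<dots> = (\<Sum>G\<in>Pow S. \<Prod>x\<in>S. if x \<in> G then a x else b x)"
  proof (rule sum.cong[OF refl])
    fix G
    assume "G \<in> Pow S"
    then have "S \<inter> {x. x \<in> G} = G" "S \<inter> - {x. x \<in> G} = S - G" by auto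
    then show "(\<Prod>x\<in>G. a x) * (\<Prod>x\<in>S - G. b x) = (\<Prod>x\<in>S. if x \<in> G then a x else b x)"
      by (simp add: prod.If_cases[OF assms])
  qed
  finally show ?thesis by simp
qed

lemma expect_eq_prod:
  assumes "\<And>G. G \<subseteq> vpairs n \<Longrightarrow>
             graph_prob n q G * f G = (\<Prod>x\<in>vpairs n. if x \<in> G then a x else b x)"
  shows "expect n q f = (\<Prod>x\<in>vpairs n. a x + b x)"
  unfolding expect_def graphs_def
  by (subst sum_Pow_prod_if[symmetric]) (auto intro!: sum.cong simp: assms)

lemma ecount_eq_card_Int: "G \<subseteq> vpairs n \<Longrightarrow> ecount D G = real (card (G \<inter> pairs_within n D))"
proof -
  assume "G \<subseteq> vpairs n"
  then have "{(i, j) \<in> G. i \<in> D \<and> j \<in> D} = G \<inter> pairs_within n D"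
    by (auto simp: pairs_within_def)
  then show ?thesis by (simp add: ecount_def)
qed

lemma expect_ecount: "expect n q (ecount D) = (\<Sum>x\<in>pairs_within n D. case_prod q x)"
proof -
  have "expect n q (ecount D) = expect n q (\<lambda>G. \<Sum>x\<in>pairs_within n D. if x \<in> G then 1 else 0)"
    unfolding expect_def graphs_def
    by (rule sum.cong[OF refl]) (auto simp: ecount_eq_card_Int sum.If_cases Int_commute)
  also have "\<dots> = (\<Sum>x\<in>pairs_within n D. expect n q (\<lambda>G. if x \<in> G then 1 else 0))"
    by (rule expect_sum)
  also have "\<dots> = (\<Sum>x\<in>pairs_within n D. case_prod q x)"
  proof (rule sum.cong[OF refl])
    fix y
    assume "y \<in> pairs_within n D"
    then have y: "y \<in> vpairs n"
      using pairs_within_subset by blast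
    have "expect n q (\<lambda>G. if y \<in> G then 1 else 0) =
        (\<Prod>x\<in>vpairs n. case_prod q x + (if x = y then 0 else 1 - case_prod q x))"
      by (rule expect_eq_prod) (auto simp: graph_prob_eq_prod y prod.If_cases intro!: prod.cong)
    also have "\<dots> = case_prod q y"
      by (subst prod.remove[OF finite_vpairs y]) (auto intro!: prod.neutral)
    finally show "expect n q (\<lambda>G. if y \<in> G then 1 else 0) = case_prod q y" .
  qed
  finally show ?thesis .
qed

lemma expect_ecount_nonneg: "edge_probs n q \<Longrightarrow> 0 \<le> expect n q (ecount D)"
  unfolding expect_ecount edge_probs_def
  by (rule sum_nonneg) (use pairs_within_subset in fastforce)

lemma expect_ecount_alt_prob:
  "D \<subseteq> C \<Longrightarrow> expect n (alt_prob p \<rho> C) (ecount D) = \<rho> * expect n p (ecount D)"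
  unfolding expect_ecount sum_distrib_left
  by (rule sum.cong) (auto simp: pairs_within_def alt_prob_def)

section \<open>Chernoff bounds for edge counts\<close>

lemma expect_exp_ecount:
  "expect n q (\<lambda>G. exp (s * ecount D G)) =
     (\<Prod>x\<in>vpairs n. case_prod q x * (if x \<in> pairs_within n D then exp s else 1) + (1 - case_prod q x))"
proof (rule expect_eq_prod)
  fix G
  assume G: "G \<subseteq> vpairs n"
  let ?w = "\<lambda>x. if x \<in> pairs_within n D then exp s else 1"
  have "exp (s * ecount D G) = (\<Prod>x\<in>G \<inter> pairs_within n D. exp s)"
    by (simp add: ecount_eq_card_Int[OF G] exp_of_nat2_mult)
  also have "\<dots> = (\<Prod>x\<in>G. ?w x)"
    by (simp add: prod.If_cases finite_subset[OF G] Int_def)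
  also have "\<dots> = (\<Prod>x\<in>vpairs n. if x \<in> G then ?w x else 1)"
    by (simp add: prod.If_cases Int_absorb1[OF G])
  finally have exp_ecount: "exp (s * ecount D G) = (\<Prod>x\<in>vpairs n. if x \<in> G then ?w x else 1)" .
  show "graph_prob n q G * exp (s * ecount D G) =
      (\<Prod>x\<in>vpairs n. if x \<in> G then case_prod q x * ?w x else 1 - case_prod q x)"
    unfolding graph_prob_eq_prod exp_ecount prod.distrib[symmetric] by (intro prod.cong) auto
qed

lemma expect_exp_ecount_le:
  assumes q: "edge_probs n q"
  shows "expect n q (\<lambda>G. exp (s * ecount D G)) \<le> exp ((exp s - 1) * expect n q (ecount D))"
proof -
  let ?w = "\<lambda>x. if x \<in> pairs_within n D then exp s else 1"
  have "expect n q (\<lambda>G. exp (s * ecount D G)) =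
      (\<Prod>x\<in>vpairs n. 1 + case_prod q x * (?w x - 1))"
    unfolding expect_exp_ecount by (simp add: algebra_simps)
  also have "\<dots> \<le> (\<Prod>x\<in>vpairs n. exp (case_prod q x * (?w x - 1)))"
  proof (rule prod_mono)
    fix x
    assume "x \<in> vpairs n"
    then have "0 \<le> case_prod q x" "case_prod q x \<le> 1"
      using q by (auto simp: edge_probs_def split: prod.splits)
    moreover have "0 \<le> case_prod q x * ?w x"
      using \<open>0 \<le> case_prod q x\<close> by (intro mult_nonneg_nonneg) auto
    moreover have "1 + case_prod q x * (?w x - 1) = case_prod q x * ?w x + (1 - case_prod q x)"
      by (simp add: algebra_simps)
    ultimately have "0 \<le> 1 + case_prod q x * (?w x - 1)"
      by linarith
    then show "0 \<le> 1 + case_prod q x * (?w x - 1) \<and>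
        1 + case_prod q x * (?w x - 1) \<le> exp (case_prod q x * (?w x - 1))"
      using exp_ge_add_one_self by blast
  qed
  also have "\<dots> = exp (\<Sum>x\<in>vpairs n. case_prod q x * (?w x - 1))"
    by (simp add: exp_sum)
  also have "(\<Sum>x\<in>vpairs n. case_prod q x * (?w x - 1))
      = (\<Sum>x\<in>vpairs n. if x \<in> pairs_within n D then case_prod q x * (exp s - 1) else 0)"
    by (intro sum.cong) auto
  also have "\<dots> = (\<Sum>x\<in>pairs_within n D. case_prod q x * (exp s - 1))"
    using pairs_within_subset[of n D] by (simp add: sum.inter_restrict[symmetric] Int_absorb1 Int_absorb2)
  also have "\<dots> = (exp s - 1) * expect n q (ecount D)"
    by (simp add: expect_ecount sum_distrib_left mult.commute)
  finally show ?thesis .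
qed

lemma chernoff_upper_tail:
  assumes q: "edge_probs n q" and m: "expect n q (ecount D) = m" "0 < m" "m \<le> a"
  shows "prob_ev n q (\<lambda>G. a \<le> ecount D G) \<le> exp (- (m * hfun (a / m - 1)))"
proof -
  define s where "s = ln (a / m)"
  have "0 < a" "0 \<le> s"
    using m by (simp_all add: s_def)
  have "prob_ev n q (\<lambda>G. a \<le> ecount D G) \<le> exp (- (s * a)) * expect n q (\<lambda>G. exp (s * ecount D G))"
    using \<open>0 \<le> s\<close> by (intro prob_ev_le_exp_moment[OF q]) (simp add: mult_left_mono)
  also have "\<dots> \<le> exp (- (s * a)) * exp ((exp s - 1) * m)"
    using expect_exp_ecount_le[OF q, of s D] m by simp
  also have "\<dots> = exp (- (m * hfun (a / m - 1)))"
    using \<open>0 < a\<close> m by (simp add: s_def hfun_def exp_add[symmetric] field_simps)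
  finally show ?thesis .
qed

lemma chernoff_lower_tail:
  assumes q: "edge_probs n q" and \<mu>: "expect n q (ecount D) = \<mu>" "0 < \<mu>" and t: "0 \<le> t"
  shows "prob_ev n q (\<lambda>G. ecount D G \<le> \<mu> - t) \<le> exp (- (t^2 / (2 * \<mu>)))"
proof -
  define s where "s = t / \<mu>"
  have "0 \<le> s"
    using t \<mu> by (simp add: s_def)
  have "prob_ev n q (\<lambda>G. ecount D G \<le> \<mu> - t)
      \<le> exp (- (s * (t - \<mu>))) * expect n q (\<lambda>G. exp (- s * ecount D G))"
  proof (rule prob_ev_le_exp_moment[OF q])
    fix G
    assume "ecount D G \<le> \<mu> - t"
    then have "s * ecount D G \<le> s * (\<mu> - t)"
      using \<open>0 \<le> s\<close> by (rule mult_left_mono)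
    then show "s * (t - \<mu>) \<le> - s * ecount D G"
      by (simp add: algebra_simps)
  qed
  also have "\<dots> \<le> exp (- (s * (t - \<mu>))) * exp ((exp (- s) - 1) * \<mu>)"
    using expect_exp_ecount_le[OF q, of "- s" D] \<mu> by simp
  also have "\<dots> \<le> exp (- (s * (t - \<mu>))) * exp ((- s + s^2 / 2) * \<mu>)"
    using exp_minus_le_quadratic[OF \<open>0 \<le> s\<close>] \<mu> by simp
  also have "\<dots> = exp (- (t^2 / (2 * \<mu>)))"
    using \<mu> by (simp add: s_def exp_add[symmetric] field_simps power2_eq_square)
  finally show ?thesis .
qed

section \<open>The scan statistic\<close>

(* The left-hand side is the tangent at e = rho m of the convex function e |-> m h(max (e / m - 1) 0). *)
lemma hfun_tangent_le:
  fixes m \<rho> e :: real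
  assumes m: "0 < m" and \<rho>: "1 < \<rho>"
  shows "m * hfun (\<rho> - 1) + ln \<rho> * (e - \<rho> * m) \<le> m * hfun (max (e / m - 1) 0)"
proof (cases "m \<le> e")
  case True
  then have "0 < e"
    using m by simp
  have "m * hfun (max (e / m - 1) 0) = e * ln (e / m) - e + m"
    using True m by (simp add: hfun_def field_simps)
  moreover have "e * ln (\<rho> * m / e) \<le> \<rho> * m - e"
    using ln_le_minus_one[of "\<rho> * m / e"] \<open>0 < e\<close> m \<rho> by (simp add: field_simps)
  moreover have "ln (\<rho> * m / e) = ln \<rho> - ln (e / m)"
    using \<open>0 < e\<close> m \<rho> by (simp add: ln_div ln_mult)
  ultimately show ?thesis
    using \<rho> by (simp add: hfun_def algebra_simps)
next
  case False
  then have "m * hfun (max (e / m - 1) 0) = 0"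
    using m by (simp add: hfun_def)
  moreover have "ln \<rho> * e \<le> ln \<rho> * m" "ln \<rho> * m \<le> (\<rho> - 1) * m"
    using False \<rho> m ln_le_minus_one[of \<rho>] by (simp_all add: mult_left_mono mult_right_mono)
  moreover have "m * hfun (\<rho> - 1) + ln \<rho> * (e - \<rho> * m) = ln \<rho> * e - (\<rho> - 1) * m"
    by (simp add: hfun_def algebra_simps)
  ultimately show ?thesis
    by linarith
qed

(* The minimum of e(D) over the event serves as a deterministic threshold for the upper tail. *)
lemma prob_hfun_deviation_le:
  assumes q: "edge_probs n q" and m: "expect n q (ecount D) = m" and t: "0 < t"
  shows "prob_ev n q (\<lambda>G. t \<le> m * hfun (max (ecount D G / m - 1) 0)) \<le> exp (- t)"
proof -
  define E where "E = {G \<in> graphs n. t \<le> m * hfun (max (ecount D G / m - 1) 0)}"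
  show ?thesis
  proof (cases "E = {}")
    case True
    then have "prob_ev n q (\<lambda>G. t \<le> m * hfun (max (ecount D G / m - 1) 0)) = 0"
      by (intro prob_ev_eq_0) (auto simp: E_def)
    then show ?thesis by simp
  next
    case False
    define a where "a = Min (ecount D ` E)"
    have "finite E"
      by (simp add: E_def)
    then have "a \<in> ecount D ` E"
      unfolding a_def using False by (intro Min_in) auto
    then obtain G0 where "G0 \<in> E" "ecount D G0 = a"
      by blast
    then have dev: "t \<le> m * hfun (max (a / m - 1) 0)"
      by (simp add: E_def)
    then have "m \<noteq> 0" "max (a / m - 1) 0 \<noteq> 0"
      using t by (auto simp: hfun_def)
    moreover have "0 \<le> m"
      using expect_ecount_nonneg[OF q] m by blast
    ultimately have "0 < m" "m \<le> a" "max (a / m - 1) 0 = a / m - 1"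
      by (auto simp: field_simps max_def split: if_splits)
    have "prob_ev n q (\<lambda>G. t \<le> m * hfun (max (ecount D G / m - 1) 0))
        \<le> prob_ev n q (\<lambda>G. a \<le> ecount D G)"
      using \<open>finite E\<close> by (intro prob_ev_mono[OF q]) (auto simp: a_def E_def)
    also have "\<dots> \<le> exp (- (m * hfun (a / m - 1)))"
      by (rule chernoff_upper_tail[OF q m \<open>0 < m\<close> \<open>m \<le> a\<close>])
    also have "\<dots> \<le> exp (- t)"
      using dev \<open>max (a / m - 1) 0 = a / m - 1\<close> by simp
    finally show ?thesis .
  qed
qed

lemma prob_scanT_ge_le:
  assumes q: "edge_probs n q" and D: "1 \<le> card D" "card D < n" and \<tau>: "0 < \<tau>"
  shows "prob_ev n q (\<lambda>G. \<tau> \<le> scanT n q D G) \<le> exp (- (\<tau> * (card D * ln (n / card D))))"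
proof -
  define m where "m = expect n q (ecount D)"
  define K where "K = real (card D) * ln (real n / real (card D))"
  have "0 < K"
    using D by (simp add: K_def)
  have "\<tau> * K \<le> m * hfun (max (ecount D G / m - 1) 0)" if "\<tau> \<le> scanT n q D G" for G
  proof (cases "m = 0")
    case True
    then show ?thesis
      using that \<tau> by (simp add: scanT_def m_def)
  next
    case False
    then show ?thesis
      using that \<open>0 < K\<close> by (simp add: scanT_def Let_def m_def[symmetric] K_def[symmetric] field_simps)
  qed
  then have "prob_ev n q (\<lambda>G. \<tau> \<le> scanT n q D G)
      \<le> prob_ev n q (\<lambda>G. \<tau> * K \<le> m * hfun (max (ecount D G / m - 1) 0))"
    by (intro prob_ev_mono[OF q])
  also have "\<dots> \<le> exp (- (\<tau> * K))"
    using \<tau> \<open>0 < K\<close> by (intro prob_hfun_deviation_le[OF q m_def[symmetric]]) simp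
  finally show ?thesis
    by (simp add: K_def)
qed

lemma lower_tail_exponent_ge_min:
  fixes m \<rho> :: real
  assumes m: "0 < m" and \<rho>: "1 < \<rho>"
  shows "min (m * hfun (\<rho> - 1) / (4 * exp 2)) (\<rho> * m / 8)
           \<le> (m * hfun (\<rho> - 1) / ln \<rho>)^2 / (2 * (\<rho> * m))"
proof -
  define g L where "g = m * hfun (\<rho> - 1)" and "L = ln \<rho>"
  have "0 < g" "0 < L"
    using m \<rho> hfun_pos[OF \<rho>] by (simp_all add: g_def L_def)
  show ?thesis
  proof (cases "L \<le> 2")
    case True
    then have "\<rho> \<le> exp 2"
      using \<rho> exp_le_cancel_iff[of L 2] by (simp add: L_def)
    have "m * (L^2 / 2) \<le> g"
      using ln_square_le_hfun[of \<rho>] m \<rho> by (simp add: g_def L_def)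
    then have "1 \<le> 2 * g / (m * L^2)"
      using m \<open>0 < L\<close> by simp
    have "g / (4 * exp 2) \<le> g / (4 * \<rho>)"
      using \<open>\<rho> \<le> exp 2\<close> \<rho> \<open>0 < g\<close> by (intro divide_left_mono) auto
    also have "\<dots> \<le> g / (4 * \<rho>) * (2 * g / (m * L^2))"
      using mult_left_mono[OF \<open>1 \<le> 2 * g / (m * L^2)\<close>, of "g / (4 * \<rho>)"] \<open>0 < g\<close> \<rho> by simp
    also have "\<dots> = (g / L)^2 / (2 * (\<rho> * m))"
      using m \<rho> \<open>0 < L\<close> by (simp add: power2_eq_square)
    finally show ?thesis
      by (simp add: g_def L_def)
  next
    case False
    have "g = \<rho> * m * L - \<rho> * m + m"
      using \<rho> by (simp add: g_def L_def hfun_def algebra_simps)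
    moreover have "0 \<le> \<rho> * m * (L / 2 - 1)"
      using False m \<rho> by simp
    ultimately have "\<rho> * m * L / 2 \<le> g"
      using m by (simp add: algebra_simps)
    have "\<rho> * m / 8 = (\<rho> * m * L / 2 / L)^2 / (2 * (\<rho> * m))"
      using m \<rho> \<open>0 < L\<close> by (simp add: power2_eq_square)
    also have "\<dots> \<le> (g / L)^2 / (2 * (\<rho> * m))"
      using \<open>\<rho> * m * L / 2 \<le> g\<close> m \<rho> \<open>0 < L\<close>
      by (intro divide_right_mono power_mono) auto
    finally show ?thesis
      by (simp add: g_def L_def)
  qed
qed

lemma ecount_deficit_if_scanT_lt:
  fixes \<epsilon> \<rho> m :: real
  assumes D: "1 \<le> card D" "card D < n" and m: "expect n q (ecount D) = m" "0 < m"
    and \<rho>: "1 < \<rho>" and \<epsilon>: "0 < \<epsilon>"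
    and signal: "(1 + \<epsilon>) * (card D * ln (n / card D)) \<le> m * hfun (\<rho> - 1)"
    and T: "scanT n q D G < 1 + \<epsilon> / 2"
  shows "ecount D G \<le> \<rho> * m - \<epsilon> / (2 * (1 + \<epsilon>)) * (m * hfun (\<rho> - 1) / ln \<rho>)"
proof (rule ccontr)
  define K g c L where "K = real (card D) * ln (real n / real (card D))"
    and "g = m * hfun (\<rho> - 1)" and "c = \<epsilon> / (2 * (1 + \<epsilon>))" and "L = ln \<rho>"
  have "0 < K" "0 < L" "c < 1"
    using D \<rho> \<epsilon> by (simp_all add: K_def L_def c_def)
  assume "\<not> ecount D G \<le> \<rho> * m - c * (g / L)"
  then have "L * (- c * (g / L)) \<le> L * (ecount D G - \<rho> * m)"
    using \<open>0 < L\<close> by (intro mult_left_mono) auto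
  then have "(1 - c) * g \<le> g + L * (ecount D G - \<rho> * m)"
    using \<open>0 < L\<close> by (simp add: algebra_simps)
  moreover have "(1 - c) * ((1 + \<epsilon>) * K) \<le> (1 - c) * g"
    using signal \<open>c < 1\<close> by (intro mult_left_mono) (simp_all add: K_def g_def)
  moreover have "g + L * (ecount D G - \<rho> * m) \<le> m * hfun (max (ecount D G / m - 1) 0)"
    using hfun_tangent_le[OF m(2) \<rho>] by (simp add: g_def L_def)
  ultimately have "(1 - c) * ((1 + \<epsilon>) * K) \<le> m * hfun (max (ecount D G / m - 1) 0)"
    by linarith
  moreover have "(1 - c) * (1 + \<epsilon>) = 1 + \<epsilon> / 2"
    using \<epsilon> by (simp add: c_def field_simps)
  ultimately have "(1 + \<epsilon> / 2) * K \<le> m * hfun (max (ecount D G / m - 1) 0)"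
    by (metis mult.assoc)
  then have "1 + \<epsilon> / 2 \<le> m * hfun (max (ecount D G / m - 1) 0) / K"
    using \<open>0 < K\<close> by (simp add: pos_le_divide_eq)
  with T m show False
    by (simp add: scanT_def Let_def K_def)
qed

lemma prob_scanT_lt_le:
  fixes \<epsilon> \<rho> m :: real
  assumes q1: "edge_probs n q1" and D: "1 \<le> card D" "card D < n"
    and m: "expect n q0 (ecount D) = m" and \<mu>: "expect n q1 (ecount D) = \<rho> * m"
    and \<rho>: "1 < \<rho>" and \<epsilon>: "0 < \<epsilon>"
    and signal: "(1 + \<epsilon>) * (card D * ln (n / card D)) \<le> m * hfun (\<rho> - 1)"
  shows "prob_ev n q1 (\<lambda>G. scanT n q0 D G < 1 + \<epsilon> / 2)
           \<le> exp (- ((\<epsilon> / (2 * (1 + \<epsilon>)))^2 * min (m * hfun (\<rho> - 1) / (4 * exp 2)) (\<rho> * m / 8)))"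
proof -
  define g c L where "g = m * hfun (\<rho> - 1)" and "c = \<epsilon> / (2 * (1 + \<epsilon>))" and "L = ln \<rho>"
  have "0 < (1 + \<epsilon>) * (card D * ln (n / card D))"
    using D \<epsilon> by simp
  then have "0 < g"
    using signal by (simp add: g_def)
  then have "0 < m"
    using hfun_pos[OF \<rho>] by (simp add: g_def zero_less_mult_iff)
  have "prob_ev n q1 (\<lambda>G. scanT n q0 D G < 1 + \<epsilon> / 2)
      \<le> prob_ev n q1 (\<lambda>G. ecount D G \<le> \<rho> * m - c * (g / L))"
    using ecount_deficit_if_scanT_lt[OF D m \<open>0 < m\<close> \<rho> \<epsilon> signal]
    by (intro prob_ev_mono[OF q1]) (simp add: g_def c_def L_def)
  also have "\<dots> \<le> exp (- ((c * (g / L))^2 / (2 * (\<rho> * m))))"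
    using \<open>0 < m\<close> \<rho> \<epsilon> \<open>0 < g\<close>
    by (intro chernoff_lower_tail[OF q1 \<mu>]) (simp_all add: c_def L_def)
  also have "\<dots> \<le> exp (- (c^2 * min (g / (4 * exp 2)) (\<rho> * m / 8)))"
    using mult_left_mono[OF lower_tail_exponent_ge_min[OF \<open>0 < m\<close> \<rho>], of "c^2"]
    by (simp add: g_def L_def power_mult_distrib power_divide)
  finally show ?thesis
    by (simp add: c_def g_def)
qed

lemma sum_subsets_by_card:
  assumes "finite V"
  shows "(\<Sum>D\<in>{D. D \<subseteq> V \<and> 1 \<le> card D \<and> card D \<le> r}. f (card D))
           = (\<Sum>k=1..r. real (card V choose k) * f k)"
proof -
  let ?S = "{D. D \<subseteq> V \<and> 1 \<le> card D \<and> card D \<le> r}"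
  have "finite ?S"
    by (rule finite_subset[of _ "Pow V"]) (use assms in auto)
  then have "(\<Sum>D\<in>?S. f (card D)) = (\<Sum>k=1..r. \<Sum>D\<in>{D\<in>?S. card D = k}. f (card D))"
    by (intro sum.group[symmetric]) auto
  also have "\<dots> = (\<Sum>k=1..r. real (card V choose k) * f k)"
  proof (rule sum.cong[OF refl])
    fix k
    assume "k \<in> {1..r}"
    then have "{D\<in>?S. card D = k} = {D. D \<subseteq> V \<and> card D = k}"
      by auto
    then show "(\<Sum>D\<in>{D\<in>?S. card D = k}. f (card D)) = real (card V choose k) * f k"
      by (simp add: n_subsets[OF assms])
  qed
  finally show ?thesis .
qed

lemma scan_test_null_error_le:
  fixes \<epsilon> :: real
  assumes q: "edge_probs n q" and r: "1 \<le> r" "r < n" and \<epsilon>: "0 < \<epsilon>"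
  shows "prob_ev n q (\<lambda>G. scan_test n q r \<epsilon> G \<noteq> 0) \<le> (\<Sum>k=1..r. exp (1 - \<epsilon> / 2 * ln (n / r)) ^ k)"
proof -
  let ?S = "{D. D \<subseteq> verts n \<and> 1 \<le> card D \<and> card D \<le> r}"
  let ?\<tau> = "1 + \<epsilon> / 2"
  have "finite ?S"
    by (rule finite_subset[of _ "Pow (verts n)"]) (auto simp: verts_def)
  have "prob_ev n q (\<lambda>G. scan_test n q r \<epsilon> G \<noteq> 0) \<le> prob_ev n q (\<lambda>G. \<exists>D\<in>?S. ?\<tau> \<le> scanT n q D G)"
    by (rule prob_ev_mono[OF q]) (auto simp: scan_test_def split: if_splits)
  also have "\<dots> \<le> (\<Sum>D\<in>?S. prob_ev n q (\<lambda>G. ?\<tau> \<le> scanT n q D G))"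
    by (rule prob_ev_Bex_le_sum[OF q \<open>finite ?S\<close>])
  also have "\<dots> \<le> (\<Sum>D\<in>?S. exp (- (?\<tau> * (card D * ln (n / card D)))))"
    using r \<epsilon> by (intro sum_mono prob_scanT_ge_le[OF q]) auto
  also have "\<dots> = (\<Sum>k=1..r. real (n choose k) * exp (- (?\<tau> * (k * ln (n / k)))))"
    using sum_subsets_by_card[of "verts n"] by (simp add: verts_def)
  also have "\<dots> \<le> (\<Sum>k=1..r. exp (1 - \<epsilon> / 2 * ln (n / r)) ^ k)"
  proof (rule sum_mono)
    fix k
    assume k: "k \<in> {1..r}"
    then have "0 < real k" "k \<le> n"
      using r by auto
    have "ln (n / r) \<le> ln (n / k)"
      using k r by (intro ln_mono) (auto simp: field_simps intro!: mult_left_mono)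
    have "(exp 1 * real n / real k) ^ k = exp (k * (1 + ln (n / k)))"
      using \<open>0 < real k\<close> \<open>k \<le> n\<close> by (simp add: exp_of_nat_mult exp_add)
    then have "real (n choose k) * exp (- (?\<tau> * (k * ln (n / k))))
        \<le> exp (k * (1 + ln (n / k))) * exp (- (?\<tau> * (k * ln (n / k))))"
      using binomial_le_exp_power[of n k] by (intro mult_right_mono) simp_all
    also have "\<dots> = exp (k * (1 - \<epsilon> / 2 * ln (n / k)))"
      by (simp add: exp_add[symmetric] algebra_simps)
    also have "\<dots> \<le> exp (k * (1 - \<epsilon> / 2 * ln (n / r)))"
      using \<open>ln (n / r) \<le> ln (n / k)\<close> \<open>0 < real k\<close> \<epsilon> by (simp add: mult_left_mono)
    also have "\<dots> = exp (1 - \<epsilon> / 2 * ln (n / r)) ^ k"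
      by (simp add: exp_of_nat_mult)
    finally show "real (n choose k) * exp (- (?\<tau> * (k * ln (n / k))))
        \<le> exp (1 - \<epsilon> / 2 * ln (n / r)) ^ k" .
  qed
  finally show ?thesis .
qed

lemma most_informative_signal:
  assumes D: "most_informative n p C D" "1 \<le> card D" "card D < n" and h: "0 < h"
    and signal: "\<exists>D'. D' \<noteq> {} \<and> D' \<subseteq> C \<and>
                   expect n p (ecount D') * h / (real (card D') * ln (n / card D')) \<ge> 1 + \<epsilon>"
  shows "(1 + \<epsilon>) * (card D * ln (n / card D)) \<le> expect n p (ecount D) * h"
proof -
  obtain D' where D': "D' \<noteq> {}" "D' \<subseteq> C"
    and "1 + \<epsilon> \<le> info_ratio n p D' * h"
    using signal by (auto simp: info_ratio_def)
  moreover have "info_ratio n p D' \<le> info_ratio n p D"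
    using D D' by (auto simp: most_informative_def)
  ultimately have "1 + \<epsilon> \<le> info_ratio n p D * h"
    using mult_right_mono[of "info_ratio n p D'" "info_ratio n p D" h] h by linarith
  moreover have "0 < card D * ln (n / card D)"
    using D by simp
  ultimately show ?thesis
    by (simp add: info_ratio_def field_simps)
qed

lemma scanT_lt_if_scan_test_ne_1:
  assumes "D \<subseteq> verts n" "1 \<le> card D" "card D \<le> r" "scan_test n q r \<epsilon> G \<noteq> 1"
  shows "scanT n q D G < 1 + \<epsilon> / 2"
  using assms unfolding scan_test_def by (meson not_le)

lemma scan_test_alt_error_le:
  fixes \<epsilon> \<rho> :: real
  assumes q1: "edge_probs n (alt_prob p \<rho> C)" and C: "C \<subseteq> verts n" "card C = r"
    and "r < n" and \<rho>: "1 < \<rho>" and \<epsilon>: "0 < \<epsilon>" and D: "most_informative n p C D"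
    and signal: "\<exists>D'. D' \<noteq> {} \<and> D' \<subseteq> C \<and>
                   expect n p (ecount D') * hfun (\<rho> - 1) / (real (card D') * ln (n / card D')) \<ge> 1 + \<epsilon>"
  shows "prob_ev n (alt_prob p \<rho> C) (\<lambda>G. scan_test n p r \<epsilon> G \<noteq> 1)
           \<le> exp (- ((\<epsilon> / (2 * (1 + \<epsilon>)))^2
                    * min (ln (n / r) / (4 * exp 2)) (expect n (alt_prob p \<rho> C) (ecount D) / 8)))"
proof -
  define m where "m = expect n p (ecount D)"
  have "D \<noteq> {}" "D \<subseteq> C" "finite C"
    using D C by (auto simp: most_informative_def verts_def intro: finite_subset)
  then have "1 \<le> card D" "card D \<le> r"
    using C card_mono[of C D] by (auto simp: Suc_le_eq card_gt_0_iff intro: finite_subset)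
  then have "card D < n"
    using \<open>r < n\<close> by simp
  have signal_D: "(1 + \<epsilon>) * (card D * ln (n / card D)) \<le> m * hfun (\<rho> - 1)"
    unfolding m_def by (rule most_informative_signal[OF D \<open>1 \<le> card D\<close> \<open>card D < n\<close> hfun_pos[OF \<rho>] signal])
  have "ln (n / r) \<le> ln (n / card D)"
    using \<open>1 \<le> card D\<close> \<open>card D \<le> r\<close> \<open>r < n\<close> by (intro ln_mono) (auto intro!: divide_left_mono)
  also have "\<dots> \<le> (1 + \<epsilon>) * (card D * ln (n / card D))"
    using \<open>1 \<le> card D\<close> \<open>card D < n\<close> \<epsilon> mult_mono[of 1 "1 + \<epsilon>" 1 "real (card D)"] by simp
  also note signal_D
  finally have "ln (n / r) \<le> m * hfun (\<rho> - 1)" .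
  have "prob_ev n (alt_prob p \<rho> C) (\<lambda>G. scan_test n p r \<epsilon> G \<noteq> 1)
      \<le> prob_ev n (alt_prob p \<rho> C) (\<lambda>G. scanT n p D G < 1 + \<epsilon> / 2)"
    using \<open>D \<subseteq> C\<close> C \<open>1 \<le> card D\<close> \<open>card D \<le> r\<close>
    by (intro prob_ev_mono[OF q1] scanT_lt_if_scan_test_ne_1) auto
  also have "\<dots> \<le> exp (- ((\<epsilon> / (2 * (1 + \<epsilon>)))^2
                    * min (m * hfun (\<rho> - 1) / (4 * exp 2)) (\<rho> * m / 8)))"
    by (rule prob_scanT_lt_le[OF q1 \<open>1 \<le> card D\<close> \<open>card D < n\<close> m_def[symmetric]
          expect_ecount_alt_prob[OF \<open>D \<subseteq> C\<close>, of n p \<rho>, folded m_def] \<rho> \<epsilon> signal_D])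
  also have "\<dots> \<le> exp (- ((\<epsilon> / (2 * (1 + \<epsilon>)))^2
                    * min (ln (n / r) / (4 * exp 2)) (expect n (alt_prob p \<rho> C) (ecount D) / 8)))"
  proof -
    have "min (ln (n / r) / (4 * exp 2)) (\<rho> * m / 8) \<le> min (m * hfun (\<rho> - 1) / (4 * exp 2)) (\<rho> * m / 8)"
      using \<open>ln (n / r) \<le> m * hfun (\<rho> - 1)\<close> by (intro min.mono divide_right_mono) auto
    from mult_left_mono[OF this, of "(\<epsilon> / (2 * (1 + \<epsilon>)))^2"] show ?thesis
      by (simp add: expect_ecount_alt_prob[OF \<open>D \<subseteq> C\<close>] m_def)
  qed
  finally show ?thesis .
qed

section \<open>Asymptotics\<close>

lemma edge_probs_alt_prob:
  assumes "edge_probs n p" "0 \<le> \<rho>" "\<And>i j. i \<in> C \<Longrightarrow> j \<in> C \<Longrightarrow> i \<noteq> j \<Longrightarrow> \<rho> * p i j \<le> 1"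
  shows "edge_probs n (alt_prob p \<rho> C)"
  using assms by (auto simp: edge_probs_def alt_prob_def vpairs_def)

lemma eventually_less_if_ratio_tendsto_0:
  assumes "(\<lambda>n. real (r n) / real n) \<longlonglongrightarrow> 0"
  shows "\<forall>\<^sub>F n in sequentially. r n < n"
proof -
  have "\<forall>\<^sub>F n in sequentially. real (r n) / real n < 1"
    using order_tendstoD(2)[OF assms] by simp
  then show ?thesis
    using eventually_gt_at_top[of 0] by eventually_elim (simp add: divide_less_eq)
qed

lemma filterlim_ln_ratio_at_top:
  assumes "(\<lambda>n. real (r n) / real n) \<longlonglongrightarrow> 0" "\<forall>\<^sub>F n in sequentially. 1 \<le> r n"
  shows "filterlim (\<lambda>n. ln (real n / real (r n))) at_top sequentially"
proof -
  have "\<forall>\<^sub>F n in sequentially. 0 < real (r n) / real n"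
    using assms(2) eventually_gt_at_top[of 0] by eventually_elim auto
  with assms(1) have "filterlim (\<lambda>n. inverse (real (r n) / real n)) at_top sequentially"
    by (rule filterlim_inverse_at_top)
  then show ?thesis
    by (intro filterlim_compose[OF ln_at_top]) simp
qed

lemma Max_image_tendsto_0:
  fixes f :: "'a \<Rightarrow> 'b \<Rightarrow> real"
  assumes "\<forall>\<^sub>F n in F. finite (S n) \<and> S n \<noteq> {}" "\<And>n x. x \<in> S n \<Longrightarrow> 0 \<le> f n x"
    and "\<And>\<delta>. 0 < \<delta> \<Longrightarrow> \<forall>\<^sub>F n in F. \<forall>x\<in>S n. f n x < \<delta>"
  shows "((\<lambda>n. Max (f n ` S n)) \<longlongrightarrow> 0) F"
proof (rule order_tendstoI)
  fix a :: real
  assume "a < 0"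
  show "\<forall>\<^sub>F n in F. a < Max (f n ` S n)"
    using assms(1)
  proof eventually_elim
    case (elim n)
    then obtain x where "x \<in> S n"
      by blast
    then have "f n x \<le> Max (f n ` S n)"
      using elim by (intro Max_ge) auto
    then show ?case
      using assms(2)[OF \<open>x \<in> S n\<close>] \<open>a < 0\<close> by linarith
  qed
next
  fix a :: real
  assume "0 < a"
  show "\<forall>\<^sub>F n in F. Max (f n ` S n) < a"
    using assms(1) assms(3)[OF \<open>0 < a\<close>] by eventually_elim auto
qed

lemma scan_test_null_error_tendsto_0:
  fixes \<epsilon> :: real
  assumes q: "\<And>n. edge_probs n (p n)" and \<epsilon>: "0 < \<epsilon>"
    and r: "(\<lambda>n. real (r n) / real n) \<longlonglongrightarrow> 0" "\<forall>\<^sub>F n in sequentially. 1 \<le> r n"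
  shows "(\<lambda>n. prob_ev n (p n) (\<lambda>G. scan_test n (p n) (r n) \<epsilon> G \<noteq> 0)) \<longlonglongrightarrow> 0"
proof -
  define x where "x n = exp (1 - \<epsilon> / 2 * ln (real n / real (r n)))" for n
  have "filterlim (\<lambda>n. 1 - \<epsilon> / 2 * ln (real n / real (r n))) at_bot sequentially"
    unfolding filterlim_at_bot
  proof
    fix Z :: real
    show "\<forall>\<^sub>F n in sequentially. 1 - \<epsilon> / 2 * ln (real n / real (r n)) \<le> Z"
      using filterlim_ln_ratio_at_top[OF r, unfolded filterlim_at_top, rule_format, of "2 * (1 - Z) / \<epsilon>"]
      by eventually_elim (use \<epsilon> in \<open>simp add: field_simps\<close>)
  qed
  then have "x \<longlonglongrightarrow> 0"
    unfolding x_def by (rule filterlim_compose[OF exp_at_bot])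
  then have bound: "(\<lambda>n. x n / (1 - x n)) \<longlonglongrightarrow> 0"
    by (auto intro!: tendsto_eq_intros)
  have le_bound: "\<forall>\<^sub>F n in sequentially. prob_ev n (p n) (\<lambda>G. scan_test n (p n) (r n) \<epsilon> G \<noteq> 0) \<le> x n / (1 - x n)"
    using r(2) eventually_less_if_ratio_tendsto_0[OF r(1)] order_tendstoD(2)[OF \<open>x \<longlonglongrightarrow> 0\<close> zero_less_one]
  proof eventually_elim
    case (elim n)
    have "prob_ev n (p n) (\<lambda>G. scan_test n (p n) (r n) \<epsilon> G \<noteq> 0) \<le> (\<Sum>k=1..r n. x n ^ k)"
      using scan_test_null_error_le[OF q elim(1,2) \<epsilon>] by (simp add: x_def)
    also have "\<dots> \<le> x n / (1 - x n)"
      using elim(3) by (intro geometric_sum_from_1_le) (simp_all add: x_def)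
    finally show ?case .
  qed
  show ?thesis
    by (rule tendsto_sandwich[OF _ le_bound tendsto_const bound]) (simp add: prob_ev_nonneg[OF q])
qed

lemma finite_communities: "finite (communities n r)"
  by (rule finite_subset[of _ "Pow (verts n)"]) (auto simp: communities_def verts_def)

lemma atLeastAtMost_in_communities: "r \<le> n \<Longrightarrow> {1..r} \<in> communities n r"
  by (auto simp: communities_def verts_def)

lemma scan_test_alt_error_tendsto_0:
  fixes \<epsilon> :: real
  assumes q: "\<And>n C. C \<in> communities n (r n) \<Longrightarrow> edge_probs n (alt_prob (p n) (\<rho> n C) C)"
    and \<rho>: "\<And>n C. C \<in> communities n (r n) \<Longrightarrow> 1 < \<rho> n C" and \<epsilon>: "0 < \<epsilon>"
    and r: "(\<lambda>n. real (r n) / real n) \<longlonglongrightarrow> 0" "\<forall>\<^sub>F n in sequentially. 1 \<le> r n"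
    and most_inf: "\<And>n C. C \<in> communities n (r n) \<Longrightarrow> most_informative n (p n) C (DS n C)"
    and mean_large: "\<And>M. \<forall>\<^sub>F n in sequentially. \<forall>C \<in> communities n (r n).
                        M \<le> expect n (alt_prob (p n) (\<rho> n C) C) (ecount (DS n C))"
    and signal: "\<And>n C. C \<in> communities n (r n) \<Longrightarrow>
                  \<exists>D. D \<noteq> {} \<and> D \<subseteq> C \<and>
                      expect n (p n) (ecount D) * hfun (\<rho> n C - 1)
                        / (real (card D) * ln (real n / real (card D))) \<ge> 1 + \<epsilon>"
  shows "(\<lambda>n. Max ((\<lambda>C. prob_ev n (alt_prob (p n) (\<rho> n C) C) (\<lambda>G. scan_test n (p n) (r n) \<epsilon> G \<noteq> 1))
                  ` communities n (r n))) \<longlonglongrightarrow> 0"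
proof (rule Max_image_tendsto_0)
  show "\<forall>\<^sub>F n in sequentially. finite (communities n (r n)) \<and> communities n (r n) \<noteq> {}"
    using eventually_less_if_ratio_tendsto_0[OF r(1)]
  proof eventually_elim
    case (elim n)
    then have "{1..r n} \<in> communities n (r n)"
      by (intro atLeastAtMost_in_communities) simp
    then show ?case
      using finite_communities by blast
  qed
next
  fix \<delta> :: real
  assume "0 < \<delta>"
  define c Z where "c = (\<epsilon> / (2 * (1 + \<epsilon>)))^2" and "Z = \<bar>ln \<delta>\<bar> + 1"
  have "0 < c"
    using \<epsilon> by (simp add: c_def)
  have "exp (- Z) < exp (ln \<delta>)"
    by (simp add: Z_def)
  then have "exp (- Z) < \<delta>"
    using \<open>0 < \<delta>\<close> by simp
  show "\<forall>\<^sub>F n in sequentially. \<forall>C\<in>communities n (r n).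
          prob_ev n (alt_prob (p n) (\<rho> n C) C) (\<lambda>G. scan_test n (p n) (r n) \<epsilon> G \<noteq> 1) < \<delta>"
    using eventually_less_if_ratio_tendsto_0[OF r(1)] mean_large[of "8 * Z / c"]
      filterlim_ln_ratio_at_top[OF r, unfolded filterlim_at_top, rule_format, of "4 * exp 2 * Z / c"]
  proof eventually_elim
    case (elim n)
    show ?case
    proof
      fix C
      assume C: "C \<in> communities n (r n)"
      have "Z \<le> c * min (ln (n / r n) / (4 * exp 2))
                  (expect n (alt_prob (p n) (\<rho> n C) C) (ecount (DS n C)) / 8)"
        using elim C \<open>0 < c\<close> by (auto simp: min_mult_distrib_left field_simps)
      moreover have "C \<subseteq> verts n" "card C = r n"
        using C by (simp_all add: communities_def)
      ultimately have "prob_ev n (alt_prob (p n) (\<rho> n C) C) (\<lambda>G. scan_test n (p n) (r n) \<epsilon> G \<noteq> 1)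
          \<le> exp (- Z)"
        using scan_test_alt_error_le[OF q[OF C] _ _ \<open>r n < n\<close> \<rho>[OF C] \<epsilon> most_inf[OF C] signal[OF C]]
        unfolding c_def by (meson exp_le_cancel_iff neg_le_iff_le order.trans)
      then show "prob_ev n (alt_prob (p n) (\<rho> n C) C) (\<lambda>G. scan_test n (p n) (r n) \<epsilon> G \<noteq> 1) < \<delta>"
        using \<open>exp (- Z) < \<delta>\<close> by linarith
    qed
  qed
qed (use q prob_ev_nonneg in blast)

theorem theorem2:
  fixes p :: "nat \<Rightarrow> nat \<Rightarrow> nat \<Rightarrow> real"
    and r :: "nat \<Rightarrow> nat"
    and \<rho> :: "nat \<Rightarrow> nat set \<Rightarrow> real"
    and \<epsilon> :: real
  assumes eps: "\<epsilon> > 0"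
    and p_range: "\<And>n i j. i \<in> verts n \<Longrightarrow> j \<in> verts n \<Longrightarrow> i \<noteq> j \<Longrightarrow> 0 \<le> p n i j \<and> p n i j \<le> 1"
    and p_sym: "\<And>n i j. p n i j = p n j i"
    and rho_gt: "\<And>n C. C \<in> communities n (r n) \<Longrightarrow> \<rho> n C > 1"
    and rho_le: "\<And>n C i j. C \<in> communities n (r n) \<Longrightarrow> i \<in> C \<Longrightarrow> j \<in> C \<Longrightarrow> i \<noteq> j
                  \<Longrightarrow> \<rho> n C * p n i j \<le> 1"
    and r_small: "(\<lambda>n. real (r n) / real n) \<longlonglongrightarrow> 0"
    and Dstar: "\<exists>Dstar :: nat \<Rightarrow> nat set \<Rightarrow> nat set.
                  (\<forall>n C. C \<in> communities n (r n) \<longrightarrow> most_informative n (p n) C (Dstar n C)) \<and>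
                  (\<forall>M. \<forall>\<^sub>F n in sequentially. \<forall>C \<in> communities n (r n).
                        expect n (alt_prob (p n) (\<rho> n C) C) (ecount (Dstar n C)) \<ge> M)"
    and signal: "\<And>n C. C \<in> communities n (r n) \<Longrightarrow>
                  \<exists>D. D \<noteq> {} \<and> D \<subseteq> C \<and>
                      expect n (p n) (ecount D) * hfun (\<rho> n C - 1)
                        / (real (card D) * ln (real n / real (card D))) \<ge> 1 + \<epsilon>"
  shows "(\<lambda>n. risk n (p n) (\<rho> n) (r n) (scan_test n (p n) (r n) \<epsilon>)) \<longlonglongrightarrow> 0"
proof -
  obtain DS where most_inf: "\<And>n C. C \<in> communities n (r n) \<Longrightarrow> most_informative n (p n) C (DS n C)"
    and mean_large: "\<And>M. \<forall>\<^sub>F n in sequentially. \<forall>C \<in> communities n (r n).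
                        M \<le> expect n (alt_prob (p n) (\<rho> n C) C) (ecount (DS n C))"
    using Dstar by blast
  have q0: "edge_probs n (p n)" for n
    using p_range by (auto simp: edge_probs_def vpairs_def)
  have q1: "edge_probs n (alt_prob (p n) (\<rho> n C) C)" if "C \<in> communities n (r n)" for n C
    using rho_gt[OF that] rho_le[OF that] by (intro edge_probs_alt_prob[OF q0]) auto
  have "\<forall>\<^sub>F n in sequentially. 1 \<le> r n"
    using eventually_less_if_ratio_tendsto_0[OF r_small]
  proof eventually_elim
    case (elim n)
    then have "most_informative n (p n) {1..r n} (DS n {1..r n})"
      by (intro most_inf atLeastAtMost_in_communities) simp
    then show ?case
      by (auto simp: most_informative_def)
  qed
  then show ?thesis
    unfolding risk_def
    using tendsto_add[OF scan_test_null_error_tendsto_0[OF q0 eps r_small]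
        scan_test_alt_error_tendsto_0[OF q1 rho_gt eps r_small _ most_inf mean_large signal]]
    by simp
qed

end
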